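(* Let $\rho_{AB}\in M_2(\mathbb{C})\otimes M_d(\mathbb{C})$ be a bipartite state, let $\{P_a\}_{a=0}^1$ be a nontrivial projective measurement on subsystem $A$ (i.e. $P_0,P_1$ are rank-one orthogonal projections on $\mathbb{C}^2$ with $P_0+P_1=\mathbb{1}$), and set $\rho_a=\mathrm{Tr}_A\big((P_a\otimes\mathbb{1})\rho_{AB}\big)$. Then: (i) if $\mathrm{rank}(\rho_0)=\mathrm{rank}(\rho_1)=1$, then $\mathrm{rank}(\rho_{AB})\ne3$; (ii) if $d\ge3$, $\mathrm{rank}(\rho_{AB})=3$ and $\mathrm{rank}(\rho_0)=0$, then $\mathrm{rank}(\rho_1)=3$; (iii) if $d=2$ and $\mathrm{rank}(\rho_{AB})=3$, then neither $\rho_0$ nor $\rho_1$ has rank zero. *)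

theory Defs
  imports "HOL-Analysis.Analysis"
begin

definition ctrans :: "complex^'n^'m \<Rightarrow> complex^'m^'n" where
  "ctrans A = (\<chi> i j. cnj (A $ j $ i))"

definition hermitian :: "complex^'n^'n \<Rightarrow> bool" where
  "hermitian A \<longleftrightarrow> ctrans A = A"

definition psd :: "complex^'n^'n \<Rightarrow> bool" where
  "psd A \<longleftrightarrow> hermitian A \<and>
     (\<forall>x::complex^'n. 0 \<le> Re (\<Sum>i\<in>UNIV. cnj (x $ i) * (A *v x) $ i))"

definition density :: "complex^'n^'n \<Rightarrow> bool" where
  "density A \<longleftrightarrow> psd A \<and> trace A = 1"

definition orth_proj :: "complex^'n^'n \<Rightarrow> bool" where
  "orth_proj P \<longleftrightarrow> P ** P = P \<and> hermitian P"

definition kron :: "complex^'a^'a \<Rightarrow> complex^'b^'b \<Rightarrow> complex^('a \<times> 'b)^('a \<times> 'b)" where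
  "kron A B = (\<chi> p q. A $ fst p $ fst q * B $ snd p $ snd q)"

definition ptrace_A :: "complex^('a::finite \<times> 'b)^('a \<times> 'b) \<Rightarrow> complex^'b^'b" where
  "ptrace_A M = (\<chi> j k. \<Sum>i\<in>UNIV. M $ (i, j) $ (i, k))"

end

theory Submission imports Defs begin

text \<open>
Write a rank-one projection as \<open>P\<^sub>a = u\<^sub>a u\<^sub>a\<^sup>*\<close> and let \<open>V\<^sub>a = u\<^sub>a \<otimes> 1\<close>, an isometry
\<open>\<complex>\<^sup>d \<rightarrow> \<complex>\<^sup>2 \<otimes> \<complex>\<^sup>d\<close>. Then \<open>\<rho>\<^sub>a = V\<^sub>a\<^sup>* \<rho> V\<^sub>a\<close> and \<open>V\<^sub>0 V\<^sub>0\<^sup>* + V\<^sub>1 V\<^sub>1\<^sup>* = 1\<close>, so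
\<open>\<rho> = \<rho> V\<^sub>0 V\<^sub>0\<^sup>* + \<rho> V\<^sub>1 V\<^sub>1\<^sup>*\<close> and \<open>rank \<rho> \<le> rank (\<rho> V\<^sub>0) + rank (\<rho> V\<^sub>1)\<close>. Positivity of \<open>\<rho>\<close>
gives \<open>rank (\<rho> V) = rank (V\<^sup>* \<rho> V)\<close>: if \<open>V\<^sup>* \<rho> V y = 0\<close> then \<open>\<langle>V y, \<rho> V y\<rangle> = 0\<close>, hence
\<open>\<rho> V y = 0\<close>. Therefore \<open>rank \<rho> \<le> rank \<rho>\<^sub>0 + rank \<rho>\<^sub>1\<close>, while each \<open>rank \<rho>\<^sub>a\<close> is
bounded by both \<open>rank \<rho>\<close> and \<open>d\<close>; the three claims are arithmetic consequences.
\<close>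

lemma dim_rows_le_dim_columns_gen:
  fixes A :: "'a::field^'n^'m"
  shows "vec.dim (rows A) \<le> vec.dim (columns A)"
proof -
  obtain B where B: "B \<subseteq> columns A" "vec.independent B" "columns A \<subseteq> vec.span B"
    "card B = vec.dim (columns A)"
    using vec.basis_exists by blast
  have fin: "finite B" using B(2) vec.independent_bound_general by blast
  have "\<exists>c. (\<Sum>b\<in>B. c b *s b) = column j A" for j
  proof -
    have "column j A \<in> vec.span B" using B(3) by (auto simp: columns_def)
    then show ?thesis using vec.span_finite[OF fin] by auto
  qed
  then obtain c where c: "\<And>j. (\<Sum>b\<in>B. c j b *s b) = column j A" by metis
  define R where "R b = (\<chi> j. c j b)" for b
  have "rows A \<subseteq> vec.span (R ` B)"
  proof
    fix r assume "r \<in> rows A"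
    then obtain i where r: "r = row i A" by (auto simp: rows_def)
    have "r = (\<Sum>b\<in>B. (b $ i) *s R b)"
      unfolding vec_eq_iff
    proof
      fix j
      have "r $ j = column j A $ i" by (simp add: r row_def column_def)
      also have "\<dots> = (\<Sum>b\<in>B. c j b * b $ i)" by (simp flip: c add: sum_component)
      finally show "r $ j = (\<Sum>b\<in>B. (b $ i) *s R b) $ j"
        by (simp add: sum_component R_def mult.commute)
    qed
    also have "\<dots> \<in> vec.span (R ` B)"
      by (intro vec.span_sum vec.span_scale vec.span_base imageI)
    finally show "r \<in> vec.span (R ` B)" .
  qed
  then have "vec.dim (rows A) \<le> card (R ` B)"
    using fin by (simp add: vec.dim_le_card)
  also have "\<dots> \<le> card B" using fin by (rule card_image_le)
  finally show ?thesis by (simp only: B(4))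
qed

lemma column_rank_def_gen: "rank (A::'a::field^'n^'m) = vec.dim (columns A)"
  unfolding row_rank_def_gen
  by (metis dim_rows_le_dim_columns_gen le_antisym rows_transpose columns_transpose)

lemma matrix_vector_mult_basis_gen: "(A::'a::field^'n^'m) *v axis k 1 = column k A"
  by (simp add: vec_eq_iff matrix_vector_mult_def axis_def column_def if_distrib cong: if_cong)

lemma rank_dim_range_gen: "rank (A::'a::field^'n^'m) = vec.dim (range ((*v) A))"
proof -
  have "columns A \<subseteq> range ((*v) A)"
    by (auto simp: columns_def simp flip: matrix_vector_mult_basis_gen)
  moreover have "range ((*v) A) \<subseteq> vec.span (columns A)"
    using matrix_vector_mult_in_columnspace_gen by blast
  ultimately have "vec.span (columns A) = vec.span (range ((*v) A))"
    by (simp add: vec.span_eq vec.span_superset subset_trans)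
  then show ?thesis unfolding column_rank_def_gen by (rule vec.span_eq_dim)
qed

lemma rank_mul_le_left_gen: "rank ((A::'a::field^'n^'m) ** (B::'a^'k^'n)) \<le> rank A"
  unfolding rank_dim_range_gen
  by (rule vec.dim_subset) (auto simp flip: matrix_vector_mul_assoc)

lemma rank_mul_le_right_gen: "rank ((A::'a::field^'n^'m) ** (B::'a^'k^'n)) \<le> rank B"
proof -
  have "range ((*v) (A ** B)) = (*v) A ` range ((*v) B)"
    by (simp add: image_image matrix_vector_mul_assoc)
  then show ?thesis unfolding rank_dim_range_gen
    by (metis vec.dim_image_le vec.linear_axioms)
qed

lemma rank_add_le_gen: "rank ((A::'a::field^'n^'m) + B) \<le> rank A + rank B"
proof -
  let ?S = "range ((*v) A)" and ?T = "range ((*v) B)"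
  have "vec.subspace ?S" "vec.subspace ?T"
    by (metis vec.subspace_UNIV vec.subspace_image)+
  then have "vec.dim {x + y |x y. x \<in> ?S \<and> y \<in> ?T} \<le> vec.dim ?S + vec.dim ?T"
    using vec.dim_sums_Int by fastforce
  moreover have "range ((*v) (A + B)) \<subseteq> {x + y |x y. x \<in> ?S \<and> y \<in> ?T}"
    by (auto simp: matrix_vector_mult_add_rdistrib)
  ultimately show ?thesis
    unfolding rank_dim_range_gen using vec.dim_subset order_trans by blast
qed

lemma rank_bound_gen: "rank (A::'a::field^'n^'m) \<le> CARD('m)"
  unfolding rank_dim_range_gen by (rule dim_subset_UNIV_cart_gen)

lemma rank_one_gen:
  assumes "rank (A::'a::field^'n^'m) = 1"
  obtains v where "v \<noteq> 0" and "range ((*v) A) = range (\<lambda>c. c *s v)"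
proof -
  let ?S = "range ((*v) A)"
  obtain B where B: "B \<subseteq> ?S" "vec.independent B" "?S \<subseteq> vec.span B" "card B = 1"
    using vec.basis_exists[of ?S] assms by (metis rank_dim_range_gen)
  then obtain v where "B = {v}" by (meson card_1_singletonE)
  moreover have "vec.span B = ?S"
    using B by (metis vec.span_subspace vec.subspace_UNIV vec.subspace_image)
  ultimately show ?thesis
    using B(2) that by (metis insertI1 vec.dependent_zero vec.span_singleton)
qed


definition cinner :: "complex^'n \<Rightarrow> complex^'n \<Rightarrow> complex" where
  "cinner x y = (\<Sum>i\<in>UNIV. cnj (x $ i) * y $ i)"

lemma cinner_ctrans_right: "cinner x (ctrans M *v y) = cinner (M *v x) y"
proof -
  have "cinner x (ctrans M *v y) = (\<Sum>i\<in>UNIV. \<Sum>j\<in>UNIV. cnj (x $ i) * cnj (M $ j $ i) * y $ j)"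
    by (simp add: cinner_def ctrans_def matrix_vector_mult_def sum_distrib_left mult.assoc)
  also have "\<dots> = (\<Sum>j\<in>UNIV. \<Sum>i\<in>UNIV. cnj (x $ i) * cnj (M $ j $ i) * y $ j)"
    by (rule sum.swap)
  also have "\<dots> = cinner (M *v x) y"
    by (simp add: cinner_def matrix_vector_mult_def sum_distrib_right sum_distrib_left cnj_sum
        mult.commute mult.left_commute)
  finally show ?thesis .
qed

lemma cinner_diff_left: "cinner (x - y) z = cinner x z - cinner y z"
  by (simp add: cinner_def sum_subtractf left_diff_distrib)

lemma cinner_diff_right: "cinner x (y - z) = cinner x y - cinner x z"
  by (simp add: cinner_def sum_subtractf right_diff_distrib)

lemma cinner_scale_left: "cinner (c *s x) y = cnj c * cinner x y"
  by (simp add: cinner_def sum_distrib_left mult.assoc)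

lemma cinner_scale_right: "cinner x (c *s y) = c * cinner x y"
  by (simp add: cinner_def sum_distrib_left mult.left_commute)

lemma cinner_axis_right: "cinner x (axis j 1) = cnj (x $ j)"
  by (simp add: cinner_def axis_def if_distrib cong: if_cong)

lemma cinner_self: "cinner x x = complex_of_real (\<Sum>i\<in>UNIV. (cmod (x $ i))\<^sup>2)"
  unfolding cinner_def of_real_sum complex_norm_square by (simp add: mult.commute)

lemma cinner_self_pos: "x \<noteq> 0 \<Longrightarrow> 0 < Re (cinner x x)"
  by (auto simp: cinner_self vec_eq_iff intro!: sum_pos2)

lemma psd_cinner_nonneg: "psd A \<Longrightarrow> 0 \<le> Re (cinner x (A *v x))"
  by (simp add: psd_def cinner_def)

lemma psd_ctrans: "psd A \<Longrightarrow> ctrans A = A"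
  by (simp add: psd_def hermitian_def)

lemma psd_mult_eq_0_if_cinner_eq_0:
  assumes "psd A" and form_0: "cinner x (A *v x) = 0"
  shows "A *v x = 0"
proof (rule ccontr)
  define w where "w = A *v x"
  define S where "S = Re (cinner w w)"
  define C where "C = Re (cinner w (A *v w))"
  assume "A *v x \<noteq> 0"
  then have "S > 0" by (simp add: S_def w_def cinner_self_pos)
  have "C \<ge> 0" unfolding C_def using assms(1) by (rule psd_cinner_nonneg)
  have "cinner x (A *v w) = cinner w w"
    using cinner_ctrans_right[of x A w] psd_ctrans[OF assms(1)] by (simp add: w_def)
  then have form: "Re (cinner (x - of_real t *s w) (A *v (x - of_real t *s w))) = t * (t * C - 2 * S)"
    for t
    using form_0
    by (simp add: matrix_vector_mult_diff_distrib vector_scalar_commute cinner_diff_left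
        cinner_diff_right cinner_scale_left cinner_scale_right S_def C_def w_def algebra_simps)
  define t where "t = S / (C + 1)"
  have "t > 0" using \<open>S > 0\<close> \<open>C \<ge> 0\<close> by (simp add: t_def)
  moreover have "t * C = S * (C / (C + 1))" by (simp add: t_def)
  moreover have "S * (C / (C + 1)) \<le> S"
    using \<open>S > 0\<close> \<open>C \<ge> 0\<close> by (intro mult_left_le) auto
  ultimately have "t * (t * C - 2 * S) < 0" using \<open>S > 0\<close> by (simp add: mult_pos_neg)
  then show False using form[of t] psd_cinner_nonneg[OF assms(1)] by (metis not_le)
qed

lemma rank_psd_mult_le_compression:
  fixes R :: "complex^'n^'n" and V :: "complex^'k^'n"
  assumes "psd R"
  shows "rank (R ** V) \<le> rank (ctrans V ** R ** V)"
proof -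
  let ?S = "range ((*v) (R ** V))"
  have "vec.subspace ?S" by (metis vec.subspace_UNIV vec.subspace_image)
  have inj: "inj_on ((*v) (ctrans V)) (vec.span ?S)"
    unfolding vec.span_eq_iff[THEN iffD2, OF \<open>vec.subspace ?S\<close>] vec.inj_on_iff_eq_0[OF \<open>vec.subspace ?S\<close>]
  proof (intro ballI impI)
    fix w assume "w \<in> ?S" and "ctrans V *v w = 0"
    then obtain y where w: "w = R *v (V *v y)" by (auto simp: matrix_vector_mul_assoc)
    have "cinner (V *v y) (R *v (V *v y)) = cinner y (ctrans V *v w)"
      by (simp add: w cinner_ctrans_right)
    also have "\<dots> = 0" by (simp add: \<open>ctrans V *v w = 0\<close> cinner_def)
    finally show "w = 0" unfolding w by (rule psd_mult_eq_0_if_cinner_eq_0[OF assms])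
  qed
  have "(*v) (ctrans V) ` ?S = range ((*v) (ctrans V ** R ** V))"
    by (simp add: image_image matrix_vector_mul_assoc matrix_mul_assoc)
  then show ?thesis
    unfolding rank_dim_range_gen using vec.dim_image_eq[OF vec.linear_axioms inj] by simp
qed

lemma rank_compression_le:
  fixes R :: "complex^'n^'n" and V :: "complex^'k^'n"
  shows "rank (ctrans V ** R ** V) \<le> rank R"
  using rank_mul_le_left_gen[of "ctrans V ** R" V] rank_mul_le_right_gen[of "ctrans V" R] by linarith

lemma rank_psd_le_compressions:
  fixes R :: "complex^'n^'n" and V0 V1 :: "complex^'k^'n"
  assumes "psd R" and "V0 ** ctrans V0 + V1 ** ctrans V1 = mat 1"
  shows "rank R \<le> rank (ctrans V0 ** R ** V0) + rank (ctrans V1 ** R ** V1)"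
proof -
  have "R = R ** (V0 ** ctrans V0 + V1 ** ctrans V1)" by (simp add: assms(2))
  also have "\<dots> = (R ** V0) ** ctrans V0 + (R ** V1) ** ctrans V1"
    by (simp add: matrix_add_ldistrib matrix_mul_assoc)
  finally have "rank R \<le> rank ((R ** V0) ** ctrans V0) + rank ((R ** V1) ** ctrans V1)"
    by (metis rank_add_le_gen)
  also have "\<dots> \<le> rank (R ** V0) + rank (R ** V1)"
    by (intro add_mono rank_mul_le_left_gen)
  also have "\<dots> \<le> rank (ctrans V0 ** R ** V0) + rank (ctrans V1 ** R ** V1)"
    by (intro add_mono rank_psd_mult_le_compression assms(1))
  finally show ?thesis .
qed


definition outer :: "complex^'n \<Rightarrow> complex^'n^'n" where
  "outer u = (\<chi> i j. u $ i * cnj (u $ j))"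

lemma orth_proj_rank_one_eq_outer:
  fixes P :: "complex^'n^'n"
  assumes "orth_proj P" and "rank P = 1"
  obtains u where "P = outer u"
proof -
  obtain v where "v \<noteq> 0" and range_P: "range ((*v) P) = range (\<lambda>c. c *s v)"
    using rank_one_gen[OF assms(2)] by blast
  have herm: "ctrans P = P" and idem: "P ** P = P"
    using assms(1) by (simp_all add: orth_proj_def hermitian_def)
  have "v \<in> range ((*v) P)" unfolding range_P by (metis rangeI vec.scale_one)
  then obtain w where "v = P *v w" by blast
  then have fixed: "P *v v = v" by (metis idem matrix_vector_mul_assoc)
  define N where "N = Re (cinner v v)"
  have "N > 0" using \<open>v \<noteq> 0\<close> by (simp add: N_def cinner_self_pos)
  have vv: "cinner v v = of_real N" by (simp add: N_def cinner_self)
  have proj: "P *v x = (cinner v x / of_real N) *s v" for x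
  proof -
    have "P *v x \<in> range (\<lambda>c. c *s v)" unfolding range_P[symmetric] by (rule rangeI)
    then obtain c where c: "P *v x = c *s v" by blast
    have "c * of_real N = cinner v (P *v x)" by (simp add: c vv cinner_scale_right)
    also have "\<dots> = cinner v x" using cinner_ctrans_right[of v P x] by (simp add: herm fixed)
    finally show ?thesis using \<open>N > 0\<close> by (simp add: c field_simps)
  qed
  have "P = outer (of_real (1 / sqrt N) *s v)"
  proof -
    have "P $ i $ j = v $ i * cnj (v $ j) / of_real N" for i j
      using proj[of "axis j 1"]
      by (simp add: matrix_vector_mult_basis_gen column_def cinner_axis_right vec_eq_iff)
    moreover have "complex_of_real (sqrt N) * complex_of_real (sqrt N) = of_real N"
      using \<open>N > 0\<close> by (simp flip: of_real_mult)
    ultimately show ?thesis by (simp add: vec_eq_iff outer_def field_simps)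
  qed
  then show ?thesis by (rule that)
qed

text \<open>The matrix of \<open>u \<otimes> 1 : \<complex>\<^sup>d \<rightarrow> \<complex>\<^sup>a \<otimes> \<complex>\<^sup>d\<close>.\<close>
definition ket_kron_id :: "complex^'a \<Rightarrow> complex^'d^('a \<times> 'd)" where
  "ket_kron_id u = (\<chi> p k. if snd p = k then u $ fst p else 0)"

lemma sum_if_snd_eq:
  fixes f :: "'a::finite \<times> 'b::finite \<Rightarrow> 'c::comm_monoid_add"
  shows "(\<Sum>p\<in>UNIV. if snd p = k then f p else 0) = (\<Sum>a\<in>UNIV. f (a, k))"
  by (simp add: sum.cartesian_product' sum.delta flip: UNIV_Times_UNIV)

lemma matrix_mult_ket_kron_id:
  "(A ** ket_kron_id u) $ i $ k = (\<Sum>a\<in>UNIV. A $ i $ (a, k) * u $ a)"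
proof -
  have "(A ** ket_kron_id u) $ i $ k = (\<Sum>p\<in>UNIV. if snd p = k then A $ i $ p * u $ fst p else 0)"
    by (auto simp: matrix_matrix_mult_def ket_kron_id_def intro: sum.cong)
  then show ?thesis by (simp only: sum_if_snd_eq fst_conv)
qed

lemma ctrans_ket_kron_id_mult:
  "(ctrans (ket_kron_id u) ** B) $ k $ j = (\<Sum>a\<in>UNIV. cnj (u $ a) * B $ (a, k) $ j)"
proof -
  have "(ctrans (ket_kron_id u) ** B) $ k $ j =
      (\<Sum>p\<in>UNIV. if snd p = k then cnj (u $ fst p) * B $ p $ j else 0)"
    by (auto simp: matrix_matrix_mult_def ket_kron_id_def ctrans_def intro: sum.cong)
  then show ?thesis by (simp only: sum_if_snd_eq fst_conv)
qed

lemma kron_mat_1_mult: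
  "(kron A (mat 1) ** R) $ (i, j) $ q = (\<Sum>a\<in>UNIV. A $ i $ a * R $ (a, j) $ q)"
proof -
  have "(kron A (mat 1) ** R) $ (i, j) $ q =
      (\<Sum>p\<in>UNIV. if snd p = j then A $ i $ fst p * R $ p $ q else 0)"
    by (auto simp: matrix_matrix_mult_def kron_def mat_def intro: sum.cong)
  then show ?thesis by (simp only: sum_if_snd_eq fst_conv)
qed

lemma ket_kron_id_mult_ctrans:
  "ket_kron_id u ** ctrans (ket_kron_id u :: complex^'d::finite^('a::finite \<times> 'd))
    = kron (outer u) (mat 1)"
proof -
  have "(ket_kron_id u ** ctrans (ket_kron_id u :: complex^'d^('a \<times> 'd))) $ p $ q =
      (\<Sum>k\<in>UNIV. if k = snd q then (if snd p = k then u $ fst p * cnj (u $ fst q) else 0) else 0)"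
    for p q
    unfolding matrix_matrix_mult_def ket_kron_id_def ctrans_def vec_lambda_beta
    by (intro sum.cong) auto
  then show ?thesis by (simp add: vec_eq_iff kron_def outer_def mat_def sum.delta)
qed

lemma ptrace_A_kron_outer:
  fixes R :: "complex^('a::finite \<times> 'd::finite)^('a \<times> 'd)"
  shows "ptrace_A (kron (outer u) (mat 1) ** R) = ctrans (ket_kron_id u) ** R ** ket_kron_id u"
  by (simp add: vec_eq_iff matrix_mult_ket_kron_id ctrans_ket_kron_id_mult kron_mat_1_mult
      outer_def ptrace_A_def sum_distrib_left sum_distrib_right mult_ac)

lemma kron_add_left: "kron (A + B) C = kron A C + kron B C"
  by (simp add: vec_eq_iff kron_def distrib_right)

lemma kron_mat_1_mat_1: "kron (mat 1) (mat 1) = (mat 1 :: complex^('a::finite \<times> 'b::finite)^('a \<times> 'b))"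
  by (auto simp: vec_eq_iff kron_def mat_def prod_eq_iff)

lemma rank_ptrace_A_rank_one_le:
  fixes R :: "complex^('a::finite \<times> 'd::finite)^('a \<times> 'd)"
  assumes "orth_proj P" and "rank P = 1"
  shows "rank (ptrace_A (kron P (mat 1) ** R)) \<le> rank R"
  using orth_proj_rank_one_eq_outer[OF assms]
  by (metis ptrace_A_kron_outer rank_compression_le)

lemma rank_le_ptrace_A_add:
  fixes R :: "complex^('a::finite \<times> 'd::finite)^('a \<times> 'd)"
  assumes "psd R"
    and "orth_proj P0" "orth_proj P1" and "rank P0 = 1" "rank P1 = 1" and "P0 + P1 = mat 1"
  shows "rank R \<le> rank (ptrace_A (kron P0 (mat 1) ** R)) + rank (ptrace_A (kron P1 (mat 1) ** R))"
proof -
  obtain u0 u1 where P0: "P0 = outer u0" and P1: "P1 = outer u1"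
    using orth_proj_rank_one_eq_outer assms(2-5) by metis
  let ?V0 = "ket_kron_id u0 :: complex^'d^('a \<times> 'd)" and ?V1 = "ket_kron_id u1 :: complex^'d^('a \<times> 'd)"
  have "?V0 ** ctrans ?V0 + ?V1 ** ctrans ?V1 = mat 1"
    by (simp add: ket_kron_id_mult_ctrans flip: P0 P1 kron_add_left add: assms(6) kron_mat_1_mat_1)
  then show ?thesis
    unfolding P0 P1 ptrace_A_kron_outer by (rule rank_psd_le_compressions[OF assms(1)])
qed

theorem lemma4:
  fixes \<rho> :: "complex^(2 \<times> 'd::finite)^(2 \<times> 'd)"
    and P0 P1 :: "complex^2^2"
  assumes "density \<rho>"
    and "orth_proj P0" and "orth_proj P1"
    and "rank P0 = 1" and "rank P1 = 1"
    and "P0 + P1 = mat 1"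
  shows "(rank (ptrace_A (kron P0 (mat 1) ** \<rho>)) = 1 \<and>
          rank (ptrace_A (kron P1 (mat 1) ** \<rho>)) = 1 \<longrightarrow> rank \<rho> \<noteq> 3)
       \<and> (CARD('d) \<ge> 3 \<and> rank \<rho> = 3 \<and> rank (ptrace_A (kron P0 (mat 1) ** \<rho>)) = 0
            \<longrightarrow> rank (ptrace_A (kron P1 (mat 1) ** \<rho>)) = 3)
       \<and> (CARD('d) = 2 \<and> rank \<rho> = 3
            \<longrightarrow> rank (ptrace_A (kron P0 (mat 1) ** \<rho>)) \<noteq> 0
              \<and> rank (ptrace_A (kron P1 (mat 1) ** \<rho>)) \<noteq> 0)"
proof -
  have "psd \<rho>" using assms(1) by (simp add: density_def)
  then have "rank \<rho> \<le> rank (ptrace_A (kron P0 (mat 1) ** \<rho>)) + rank (ptrace_A (kron P1 (mat 1) ** \<rho>))"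
    using assms(2-6) by (rule rank_le_ptrace_A_add)
  moreover have "rank (ptrace_A (kron P1 (mat 1) ** \<rho>)) \<le> rank \<rho>"
    using assms(3,5) by (rule rank_ptrace_A_rank_one_le)
  moreover have "rank (ptrace_A (kron P0 (mat 1) ** \<rho>)) \<le> CARD('d)"
    and "rank (ptrace_A (kron P1 (mat 1) ** \<rho>)) \<le> CARD('d)"
    by (rule rank_bound_gen)+
  ultimately show ?thesis by auto
qed

end
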